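(* Let $f:\mathbb{R}^n\to\mathbb{R}^n$ be continuously differentiable with $f(0)=0$, and let $A=Df(0)$ be Hurwitz; write $g(x)=f(x)-Ax$. Let $Q$ be a symmetric positive definite matrix and $P$ the solution of $PA+A^TP=-Q$. Let $c>0$ and $r>0$ be such that $r<\lambda_{\min}(Q)$ and $x^TPx\le c$ implies $2x^TPg(x)\le r\|x\|^2$. Let $X\subset\mathbb{R}^n$ be compact, let $W_N:X\to\mathbb{R}$ be continuously differentiable, let $\dot W_N(x)=\nabla W_N(x)\cdot f(x)$, and let $\varepsilon>0$ and $c_2>c_1>0$. Suppose that for all $x\in X$: (a) $c_1\le W_N(x)\le c_2$ implies $\dot W_N(x)\le-\varepsilon$, and (b) $W_N(x)\le c_1$ implies $x^TPx\le c$. If the set $\mathcal{W}_{c_2}=\{x\in X: W_N(x)\le c_2\}$ does not intersect the boundary of $X$, then $\mathcal{W}_{c_2}$ is contained in the domain of attraction of the origin for $\dot x=f(x)$, i.e. every solution starting in $\mathcal{W}_{c_2}$ converges to $0$.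
   Context: The domain of attraction of the origin is the set of initial conditions $x$ whose solution $\phi(t,x)$ of $\dot x=f(x)$ satisfies $\phi(t,x)\to0$ as $t\to\infty$. $\lambda_{\min}(Q)$ denotes the smallest eigenvalue of $Q$. *)

theory Defs
  imports "HOL-Analysis.Analysis"
begin

definition cmat :: "real^'n^'n \<Rightarrow> complex^'n^'n" where
  "cmat A = (\<chi> i j. complex_of_real (A $ i $ j))"

definition hurwitz :: "real^'n^'n \<Rightarrow> bool" where
  "hurwitz A \<longleftrightarrow> (\<forall>\<mu>::complex. (\<exists>v::complex^'n. v \<noteq> 0 \<and> cmat A *v v = \<mu> *s v) \<longrightarrow> Re \<mu> < 0)"

definition symmetric_mat :: "real^'n^'n \<Rightarrow> bool" where
  "symmetric_mat Q \<longleftrightarrow> transpose Q = Q"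

definition pos_def_mat :: "real^'n^'n \<Rightarrow> bool" where
  "pos_def_mat Q \<longleftrightarrow> (\<forall>x. x \<noteq> 0 \<longrightarrow> x \<bullet> (Q *v x) > 0)"

definition lambda_min :: "real^'n^'n \<Rightarrow> real" where
  "lambda_min Q = Min {l::real. \<exists>v::real^'n. v \<noteq> 0 \<and> Q *v v = l *\<^sub>R v}"

definition is_solution :: "('a::real_normed_vector \<Rightarrow> 'a) \<Rightarrow> 'a \<Rightarrow> (real \<Rightarrow> 'a) \<Rightarrow> bool" where
  "is_solution f x0 \<phi> \<longleftrightarrow> \<phi> 0 = x0 \<and>
     (\<forall>t\<ge>0. (\<phi> has_vector_derivative f (\<phi> t)) (at t within {0..}))"

definition domain_of_attraction :: "('a::real_normed_vector \<Rightarrow> 'a) \<Rightarrow> 'a set" where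
  "domain_of_attraction f = {x0. (\<exists>\<phi>. is_solution f x0 \<phi>) \<and>
      (\<forall>\<phi>. is_solution f x0 \<phi> \<longrightarrow> (\<phi> \<longlongrightarrow> 0) at_top)}"

end

(*
  Because A is Hurwitz, the Lyapunov equation forces P to be symmetric and positive definite.
  This is seen without matrix exponentials, through the Cayley transform (I + A)(I - A)^-1:
  its eigenvalues lie in the open unit disc, so its iterates are bounded, and along them the
  Lyapunov equation becomes a discrete one, which forces the iterates to 0.

  Since r < lambda_min(Q), on the ellipsoid x^T P x <= c the function V(x) = x^T P x decreases
  along solutions at rate at least (lambda_min(Q) - r) |x|^2, so the ellipsoid is forward
  invariant and solutions in it converge to 0 exponentially. A solution starting in W_c2 never
  leaves it, because W_c2 lies in the interior of X and W strictly decreases on its level set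
  W = c2. Inside W_c2, W decreases at rate epsilon as long as W > c1, so the solution reaches
  W <= c1, where by (b) it has entered the ellipsoid. Solutions from W_c2 exist because f agrees
  on this compact set with a globally Lipschitz field, whose Picard operator is a contraction
  for an exponentially weighted sup norm.
*)

theory Submission
  imports Defs "Jordan_Normal_Form.Spectral_Radius" "HOL-Real_Asymp.Real_Asymp"
begin

hide_const (open) Matrix.mat Matrix.orthogonal
no_notation Matrix.vec_index (infixl \<open>$\<close> 100)
no_notation Matrix.scalar_prod (infix \<open>\<bullet>\<close> 70)

section \<open>Quadratic forms of real matrices\<close>

lemma uminus_matrix_vector_mult: "(- M) *v x = - (M *v x :: 'a::comm_ring_1^'n)"
  by (simp add: Finite_Cartesian_Product.vec_eq_iff matrix_vector_mult_def sum_negf)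

lemma inner_matrix_vector_transpose: "(x::real^'n) \<bullet> (M *v y) = (transpose M *v x) \<bullet> y"
  by (metis dot_lmul_matrix transpose_matrix_vector)

lemma symmetric_mat_inner_commute:
  "symmetric_mat Q \<Longrightarrow> (x::real^'n) \<bullet> (Q *v y) = y \<bullet> (Q *v x)"
  unfolding symmetric_mat_def using inner_matrix_vector_transpose[of x Q y] by (simp add: inner_commute)

lemma continuous_on_quadratic_form: "continuous_on S (\<lambda>x::real^'n. x \<bullet> (M *v x))"
  by (intro continuous_intros bounded_linear.continuous_on[OF matrix_vector_mul_bounded_linear])

lemma quadratic_form_scaleR: "(a *\<^sub>R x) \<bullet> (M *v (a *\<^sub>R x)) = a\<^sup>2 * (x \<bullet> (M *v (x::real^'n)))"
  by (simp add: matrix_vector_mult_scaleR power2_eq_square)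

lemma quadratic_form_upper_bound:
  obtains K where "K > 0" "\<And>x::real^'n. \<bar>x \<bullet> (M *v x)\<bar> \<le> K * (norm x)\<^sup>2"
proof -
  obtain K where K: "K > 0" "\<And>x. norm (M *v x) \<le> norm x * K"
    using bounded_linear.pos_bounded[OF matrix_vector_mul_bounded_linear] by blast
  have "\<bar>x \<bullet> (M *v x)\<bar> \<le> K * (norm x)\<^sup>2" for x
  proof -
    have "\<bar>x \<bullet> (M *v x)\<bar> \<le> norm x * norm (M *v x)" by (rule Cauchy_Schwarz_ineq2)
    also have "\<dots> \<le> norm x * (norm x * K)" by (intro mult_left_mono K(2)) auto
    finally show ?thesis by (simp add: power2_eq_square algebra_simps)
  qed
  with K(1) show ?thesis by (rule that)
qed

lemma quadratic_form_sphere_minimum: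
  obtains u :: "real^'n" where "norm u = 1" "\<And>x. (u \<bullet> (M *v u)) * (norm x)\<^sup>2 \<le> x \<bullet> (M *v x)"
proof -
  have "sphere (0::real^'n) 1 \<noteq> {}"
    using norm_axis_1 by (metis mem_sphere_0 empty_iff)
  then obtain u where u: "u \<in> sphere (0::real^'n) 1"
    and min: "\<And>y. y \<in> sphere 0 1 \<Longrightarrow> u \<bullet> (M *v u) \<le> y \<bullet> (M *v y)"
    using continuous_attains_inf[OF compact_sphere _ continuous_on_quadratic_form] by blast
  have "(u \<bullet> (M *v u)) * (norm x)\<^sup>2 \<le> x \<bullet> (M *v x)" for x
  proof (cases "x = 0")
    case False
    have "(1 / norm x) *\<^sub>R x \<in> sphere 0 1" using False by simp
    from min[OF this] have "u \<bullet> (M *v u) \<le> (1 / norm x)\<^sup>2 * (x \<bullet> (M *v x))"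
      by (simp only: quadratic_form_scaleR)
    then show ?thesis
      using False by (simp add: field_simps)
  qed simp
  with u show ?thesis by (intro that) auto
qed

lemma pos_def_mat_lower_bound:
  assumes "pos_def_mat M"
  obtains p where "p > 0" "\<And>x::real^'n. p * (norm x)\<^sup>2 \<le> x \<bullet> (M *v x)"
proof -
  obtain u :: "real^'n" where "norm u = 1" "\<And>x. (u \<bullet> (M *v u)) * (norm x)\<^sup>2 \<le> x \<bullet> (M *v x)"
    using quadratic_form_sphere_minimum[of M] by blast
  moreover have "u \<bullet> (M *v u) > 0"
    using assms \<open>norm u = 1\<close> unfolding pos_def_mat_def by (metis norm_zero zero_neq_one)
  ultimately show ?thesis using that by blast
qed

lemma linear_le_quadratic_imp_nonpos:
  fixes D c :: real
  assumes "\<And>s. 2 * s * D \<le> s\<^sup>2 * c"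
  shows "D \<le> 0"
proof (rule ccontr)
  assume "\<not> D \<le> 0"
  define s where "s = D / (\<bar>c\<bar> + 1)"
  have "s > 0" using \<open>\<not> D \<le> 0\<close> unfolding s_def by simp
  then have "2 * D \<le> s * c"
    using assms[of s] by (simp add: power2_eq_square mult.assoc mult_le_cancel_left_pos)
  also have "s * c \<le> s * \<bar>c\<bar>"
    using \<open>s > 0\<close> by (simp add: mult_left_mono)
  also have "\<dots> = D * (\<bar>c\<bar> / (\<bar>c\<bar> + 1))"
    unfolding s_def by simp
  also have "\<dots> \<le> D"
    using \<open>\<not> D \<le> 0\<close> by (intro mult_left_le) auto
  finally show False using \<open>\<not> D \<le> 0\<close> by simp
qed

text \<open>The first-order condition comes from perturbing \<open>u\<close> along the residual \<open>d = Q u - m u\<close>,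
  which is orthogonal to \<open>u\<close>.\<close>

lemma symmetric_mat_sphere_minimizer_eigenvector:
  fixes Q :: "real^'n^'n"
  assumes sym: "symmetric_mat Q" and u: "norm u = 1"
    and min: "\<And>x. (u \<bullet> (Q *v u)) * (norm x)\<^sup>2 \<le> x \<bullet> (Q *v x)"
  shows "Q *v u = (u \<bullet> (Q *v u)) *\<^sub>R u"
proof -
  define m where "m = u \<bullet> (Q *v u)"
  define d where "d = Q *v u - m *\<^sub>R u"
  have uu: "u \<bullet> u = 1" using u by (simp add: dot_square_norm)
  have "d \<bullet> u = (Q *v u) \<bullet> u - m * (u \<bullet> u)"
    unfolding d_def by (simp add: inner_diff_left)
  then have du: "d \<bullet> u = 0"
    unfolding m_def uu by (simp add: inner_commute)
  have "(norm d)\<^sup>2 = d \<bullet> (Q *v u - m *\<^sub>R u)"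
    by (simp add: power2_norm_eq_inner d_def[symmetric])
  then have dQu: "d \<bullet> (Q *v u) = (norm d)\<^sup>2"
    using du by (simp add: inner_diff_right)
  have "2 * s * (norm d)\<^sup>2 \<le> s\<^sup>2 * (d \<bullet> (Q *v d) - m * (norm d)\<^sup>2)" for s
  proof -
    have "m * (norm (u - s *\<^sub>R d))\<^sup>2 \<le> (u - s *\<^sub>R d) \<bullet> (Q *v (u - s *\<^sub>R d))"
      using min unfolding m_def by blast
    moreover have "(norm (u - s *\<^sub>R d))\<^sup>2 = 1 + s\<^sup>2 * (norm d)\<^sup>2"
      unfolding power2_norm_eq_inner using uu du
      by (simp add: inner_diff_left inner_diff_right inner_commute power2_eq_square)
    moreover have "(u - s *\<^sub>R d) \<bullet> (Q *v (u - s *\<^sub>R d))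
        = u \<bullet> (Q *v u) - s * (u \<bullet> (Q *v d)) - s * (d \<bullet> (Q *v u)) + s\<^sup>2 * (d \<bullet> (Q *v d))"
      by (simp add: matrix_vector_mult_diff_distrib matrix_vector_mult_scaleR inner_diff_left
          inner_diff_right power2_eq_square algebra_simps)
    ultimately have "m * (1 + s\<^sup>2 * (norm d)\<^sup>2) \<le> m - 2 * s * (norm d)\<^sup>2 + s\<^sup>2 * (d \<bullet> (Q *v d))"
      using symmetric_mat_inner_commute[OF sym, of u d] dQu unfolding m_def by simp
    then show ?thesis by (simp add: algebra_simps)
  qed
  then have "(norm d)\<^sup>2 \<le> 0" by (rule linear_le_quadratic_imp_nonpos)
  then show ?thesis unfolding d_def m_def by simp
qed

lemma symmetric_mat_finite_eigenvalues:
  fixes Q :: "real^'n^'n"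
  assumes sym: "symmetric_mat Q"
  shows "finite {l. \<exists>v. v \<noteq> 0 \<and> Q *v v = l *\<^sub>R v}" (is "finite ?S")
proof -
  have "\<forall>l\<in>?S. \<exists>v. v \<noteq> 0 \<and> Q *v v = l *\<^sub>R v" by blast
  from bchoice[OF this] obtain ev where ev: "\<forall>l\<in>?S. ev l \<noteq> 0 \<and> Q *v ev l = l *\<^sub>R ev l"
    by blast
  have inj: "inj_on ev ?S"
  proof (rule inj_onI)
    fix l l' assume l: "l \<in> ?S" and l': "l' \<in> ?S" and eq: "ev l = ev l'"
    from ev l have "ev l \<noteq> 0 \<and> Q *v ev l = l *\<^sub>R ev l" ..
    moreover from ev l' have "ev l' \<noteq> 0 \<and> Q *v ev l' = l' *\<^sub>R ev l'" ..
    ultimately show "l = l'" unfolding eq by simp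
  qed
  have "orthogonal (ev l) (ev l')" if l: "l \<in> ?S" and l': "l' \<in> ?S" and ne: "l \<noteq> l'" for l l'
  proof -
    from ev l have "ev l \<noteq> 0 \<and> Q *v ev l = l *\<^sub>R ev l" ..
    moreover from ev l' have "ev l' \<noteq> 0 \<and> Q *v ev l' = l' *\<^sub>R ev l'" ..
    moreover have "ev l' \<bullet> (Q *v ev l) = ev l \<bullet> (Q *v ev l')"
      by (rule symmetric_mat_inner_commute[OF sym])
    ultimately have "l * (ev l \<bullet> ev l') = l' * (ev l \<bullet> ev l')"
      by (simp add: inner_commute)
    with ne show ?thesis unfolding real_inner_class.orthogonal_def by simp
  qed
  then have "pairwise orthogonal (ev ` ?S)"
    unfolding pairwise_def by blast
  moreover have "0 \<notin> ev ` ?S"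
  proof
    assume "0 \<in> ev ` ?S"
    then obtain l where l: "l \<in> ?S" and "0 = ev l" by (rule imageE)
    moreover from ev l have "ev l \<noteq> 0 \<and> Q *v ev l = l *\<^sub>R ev l" ..
    ultimately show False by simp
  qed
  ultimately have "independent (ev ` ?S)" by (rule pairwise_orthogonal_independent)
  then have "finite (ev ` ?S)" by (rule independent_bound[THEN conjunct1])
  then show ?thesis using inj by (rule finite_imageD)
qed

lemma lambda_min_le_quadratic_form:
  fixes Q :: "real^'n^'n"
  assumes sym: "symmetric_mat Q"
  shows "lambda_min Q * (norm x)\<^sup>2 \<le> x \<bullet> (Q *v x)"
proof -
  obtain u :: "real^'n" where u: "norm u = 1" and min: "\<And>x. (u \<bullet> (Q *v u)) * (norm x)\<^sup>2 \<le> x \<bullet> (Q *v x)"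
    using quadratic_form_sphere_minimum[of Q] by blast
  have "u \<noteq> 0" using u by auto
  then have "lambda_min Q \<le> u \<bullet> (Q *v u)"
    unfolding lambda_min_def
    using symmetric_mat_sphere_minimizer_eigenvector[OF sym u min]
    by (intro Min_le[OF symmetric_mat_finite_eigenvalues[OF sym]] CollectI exI[of _ u] conjI)
  then have "lambda_min Q * (norm x)\<^sup>2 \<le> (u \<bullet> (Q *v u)) * (norm x)\<^sup>2"
    by (simp add: mult_right_mono)
  also have "\<dots> \<le> x \<bullet> (Q *v x)" by (rule min)
  finally show ?thesis .
qed

section \<open>Matrices with all eigenvalues in the unit disc\<close>

text \<open>Cartesian matrices are transferred to the matrices of the Jordan normal form library along a
  fixed enumeration of the index type, to use its bound on the powers of a matrix of spectral
  radius less than \<open>1\<close>.\<close>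

definition cart_index :: "nat \<Rightarrow> 'n::finite" where
  "cart_index = (SOME f. bij_betw f {0..<CARD('n)} UNIV)"

lemma bij_cart_index: "bij_betw (cart_index :: nat \<Rightarrow> 'n::finite) {0..<CARD('n)} UNIV"
proof -
  have "\<exists>f. bij_betw f {0..<CARD('n)} (UNIV :: 'n set)"
    by (rule ex_bij_betw_nat_finite) simp
  then show ?thesis unfolding cart_index_def by (rule someI_ex)
qed

lemma cart_index_surj: obtains i where "i < CARD('n)" "cart_index i = (j :: 'n::finite)"
  using bij_cart_index[THEN bij_betw_imp_surj_on] by (metis atLeastLessThan_iff imageE UNIV_I)

definition mat_of_cart :: "'a^'n^'n \<Rightarrow> 'a mat" where
  "mat_of_cart M = Matrix.mat CARD('n) CARD('n) (\<lambda>(i, j). M $ cart_index i $ cart_index j)"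

definition vec_of_cart :: "'a^'n \<Rightarrow> 'a Matrix.vec" where
  "vec_of_cart x = Matrix.vec CARD('n) (\<lambda>i. x $ cart_index i)"

lemma mat_of_cart_carrier [simp]: "mat_of_cart (M :: 'a^'n^'n) \<in> carrier_mat CARD('n) CARD('n)"
  by (simp add: mat_of_cart_def)

lemma dim_mat_of_cart [simp]:
  "dim_row (mat_of_cart (M :: 'a^'n^'n)) = CARD('n)" "dim_col (mat_of_cart (M :: 'a^'n^'n)) = CARD('n)"
  by (simp_all add: mat_of_cart_def)

lemma vec_of_cart_carrier [simp]: "vec_of_cart (x :: 'a^'n) \<in> carrier_vec CARD('n)"
  by (simp add: vec_of_cart_def)

lemma vec_of_cart_inject: "vec_of_cart x = vec_of_cart y \<longleftrightarrow> x = (y :: 'a^'n)"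
proof
  assume eq: "vec_of_cart x = vec_of_cart y"
  have "x $ j = y $ j" for j
  proof -
    obtain i where "i < CARD('n)" "cart_index i = j" by (rule cart_index_surj)
    then show ?thesis using arg_cong[OF eq, of "\<lambda>v. vec_index v i"] by (simp add: vec_of_cart_def)
  qed
  then show "x = y" by (simp add: Finite_Cartesian_Product.vec_eq_iff)
qed simp

lemma vec_of_cart_surj:
  assumes "v \<in> carrier_vec CARD('n::finite)"
  obtains x :: "'a^'n" where "vec_of_cart x = v"
proof
  let ?x = "(\<chi> j. vec_index v (inv_into {0..<CARD('n)} cart_index j)) :: 'a^'n"
  show "vec_of_cart ?x = v"
  proof (rule eq_vecI)
    fix i assume "i < dim_vec v"
    then have "i \<in> {0..<CARD('n)}" using assms by simp
    moreover from this have "inv_into {0..<CARD('n)} (cart_index :: nat \<Rightarrow> 'n) (cart_index i) = i"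
      by (rule bij_betw_inv_into_left[OF bij_cart_index])
    ultimately show "vec_index (vec_of_cart ?x) i = vec_index v i"
      by (simp add: vec_of_cart_def)
  qed (use assms in simp)
qed

lemma vec_of_cart_smult: "vec_of_cart (c *s x) = c \<cdot>\<^sub>v vec_of_cart (x :: 'a::times^'n)"
  unfolding vec_of_cart_def by (rule eq_vecI) auto

lemma mat_of_cart_mult_vec: "mat_of_cart M *\<^sub>v vec_of_cart x = vec_of_cart (M *v x :: 'a::comm_semiring_1^'n)"
proof (rule eq_vecI)
  fix i assume "i < dim_vec (vec_of_cart (M *v x))"
  then have i: "i < CARD('n)" by (simp add: vec_of_cart_def)
  have "(\<Sum>l = 0..<CARD('n). M $ cart_index i $ cart_index l * x $ cart_index l)
      = (\<Sum>j\<in>UNIV. M $ cart_index i $ j * x $ j)"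
    by (rule sum.reindex_bij_betw[OF bij_cart_index])
  then show "vec_index (mat_of_cart M *\<^sub>v vec_of_cart x) i = vec_index (vec_of_cart (M *v x)) i"
    using i by (simp add: mat_of_cart_def vec_of_cart_def scalar_prod_def matrix_vector_mult_def)
qed (simp add: mat_of_cart_def vec_of_cart_def)

lemma mat_of_cart_pow_mult_vec:
  "(mat_of_cart M ^\<^sub>m k) *\<^sub>v vec_of_cart x = vec_of_cart (((*v) M ^^ k) (x :: 'a::comm_semiring_1^'n))"
proof (induction k arbitrary: x)
  case (Suc k)
  have "(mat_of_cart M ^\<^sub>m Suc k) *\<^sub>v vec_of_cart x = (mat_of_cart M ^\<^sub>m k) *\<^sub>v (mat_of_cart M *\<^sub>v vec_of_cart x)"
    by (simp add: assoc_mult_mat_vec[of _ "CARD('n)" "CARD('n)" _ "CARD('n)"])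
  then show ?case by (simp add: mat_of_cart_mult_vec Suc funpow_Suc_right del: funpow.simps)
qed simp

lemma eigenvalue_mat_of_cart:
  assumes "eigenvalue (mat_of_cart M) \<mu>"
  obtains v :: "'a::comm_ring_1^'n" where "v \<noteq> 0" "M *v v = \<mu> *s v"
proof -
  obtain w where w: "w \<in> carrier_vec CARD('n)" "w \<noteq> 0\<^sub>v CARD('n)" "mat_of_cart M *\<^sub>v w = \<mu> \<cdot>\<^sub>v w"
    using assms unfolding eigenvalue_def eigenvector_def by auto
  obtain v :: "'a^'n" where v: "vec_of_cart v = w" using vec_of_cart_surj[OF w(1)] by blast
  have "vec_of_cart (M *v v) = vec_of_cart (\<mu> *s v)"
    using w(3) unfolding v[symmetric] mat_of_cart_mult_vec vec_of_cart_smult .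
  moreover have "v \<noteq> 0" using w(2) v by (auto simp: vec_of_cart_def)
  ultimately show ?thesis using that by (simp add: vec_of_cart_inject)
qed

lemma spectral_radius_mat_of_cart_less_1:
  fixes B :: "complex^'n^'n"
  assumes ev: "\<And>\<mu> v. v \<noteq> 0 \<Longrightarrow> B *v v = \<mu> *s v \<Longrightarrow> cmod \<mu> < 1"
  shows "spectral_radius (mat_of_cart B) < 1"
proof -
  obtain \<mu> where "\<mu> \<in> spectrum (mat_of_cart B)" "spectral_radius (mat_of_cart B) = cmod \<mu>"
    using spectral_radius_mem_max(1)[OF mat_of_cart_carrier] by fastforce
  moreover from this obtain v :: "complex^'n" where "v \<noteq> 0" "B *v v = \<mu> *s v"
    unfolding spectrum_def by (auto elim: eigenvalue_mat_of_cart)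
  ultimately show ?thesis using ev by simp
qed

lemma bounded_iterates_if_eigenvalues_in_unit_disc:
  fixes B :: "complex^'n^'n"
  assumes "\<And>\<mu> v. v \<noteq> 0 \<Longrightarrow> B *v v = \<mu> *s v \<Longrightarrow> cmod \<mu> < 1"
  shows "bounded (range (\<lambda>k. ((*v) B ^^ k) x))"
proof -
  let ?N = "CARD('n)" and ?M = "mat_of_cart B"
  have "spectral_radius ?M < 1" using assms by (rule spectral_radius_mat_of_cart_less_1)
  then obtain c where c: "\<And>k. norm_bound (?M ^\<^sub>m k) c"
    using spectral_radius_jnf_norm_bound_less_1_upper_triangular[OF mat_of_cart_carrier] by blast
  have component: "norm (((*v) B ^^ k) x $ j) \<le> ?N * c * norm x" for k j
  proof -
    obtain i where i: "i < ?N" "cart_index i = j" by (rule cart_index_surj)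
    have "((*v) B ^^ k) x $ j = vec_index ((?M ^\<^sub>m k) *\<^sub>v vec_of_cart x) i"
      using i by (simp only: mat_of_cart_pow_mult_vec) (simp add: vec_of_cart_def)
    also have "\<dots> = (\<Sum>l = 0..<?N. (?M ^\<^sub>m k) $$ (i, l) * x $ cart_index l)"
      using i by (simp add: scalar_prod_def vec_of_cart_def)
    finally have "norm (((*v) B ^^ k) x $ j) \<le> (\<Sum>l = 0..<?N. norm ((?M ^\<^sub>m k) $$ (i, l)) * norm (x $ cart_index l))"
      by (simp add: norm_mult sum_norm_le)
    also have "\<dots> \<le> (\<Sum>l = 0..<?N. c * norm x)"
    proof (rule sum_mono)
      fix l assume "l \<in> {0..<?N}"
      then have "norm ((?M ^\<^sub>m k) $$ (i, l)) \<le> c"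
        using c[of k] i unfolding norm_bound_def by simp
      moreover have "norm (x $ cart_index l) \<le> norm x" by (rule Finite_Cartesian_Product.norm_nth_le)
      ultimately show "norm ((?M ^\<^sub>m k) $$ (i, l)) * norm (x $ cart_index l) \<le> c * norm x"
        by (simp add: mult_mono')
    qed
    finally show ?thesis by simp
  qed
  have "norm (((*v) B ^^ k) x) \<le> ?N * (?N * c * norm x)" for k
  proof -
    have "norm (((*v) B ^^ k) x) \<le> (\<Sum>j\<in>UNIV. norm (((*v) B ^^ k) x $ j))" unfolding norm_vec_def by (rule L2_set_le_sum) simp
    also have "\<dots> \<le> (\<Sum>j\<in>(UNIV :: 'n set). ?N * c * norm x)" by (rule sum_mono) (rule component)
    finally show ?thesis by simp
  qed
  then show ?thesis unfolding bounded_iff by blast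
qed

definition cvec :: "real^'n \<Rightarrow> complex^'n" where
  "cvec x = (\<chi> i. complex_of_real (x $ i))"

lemma cvec_eq_0_iff [simp]: "cvec x = 0 \<longleftrightarrow> x = 0"
  by (simp add: cvec_def Finite_Cartesian_Product.vec_eq_iff)

lemma norm_cvec [simp]: "norm (cvec x) = norm x"
  by (simp add: cvec_def norm_vec_def)

lemma cmat_mult_cvec: "cmat M *v cvec x = cvec (M *v x)"
  by (simp add: Finite_Cartesian_Product.vec_eq_iff cmat_def cvec_def matrix_vector_mult_def)

lemma cmat_mult: "cmat (M ** N) = cmat M ** cmat (N :: real^'n^'n)"
  by (simp add: Finite_Cartesian_Product.vec_eq_iff matrix_matrix_mult_def cmat_def)

lemma cmat_add: "cmat (M + N) = cmat M + cmat (N :: real^'n^'n)"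
  by (simp add: Finite_Cartesian_Product.vec_eq_iff cmat_def)

lemma cmat_diff: "cmat (M - N) = cmat M - cmat (N :: real^'n^'n)"
  by (simp add: Finite_Cartesian_Product.vec_eq_iff cmat_def)

lemma cmat_one: "cmat (mat 1 :: real^'n^'n) = mat 1"
  by (simp add: Finite_Cartesian_Product.vec_eq_iff cmat_def Finite_Cartesian_Product.mat_def)

lemma bounded_real_iterates_if_eigenvalues_in_unit_disc:
  fixes B :: "real^'n^'n"
  assumes "\<And>\<mu> v. v \<noteq> 0 \<Longrightarrow> cmat B *v v = \<mu> *s v \<Longrightarrow> cmod \<mu> < 1"
  shows "bounded (range (\<lambda>k. ((*v) B ^^ k) x))"
proof -
  have "((*v) (cmat B) ^^ k) (cvec x) = cvec (((*v) B ^^ k) x)" for k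
    by (induction k) (simp_all add: cmat_mult_cvec)
  moreover have "bounded (range (\<lambda>k. ((*v) (cmat B) ^^ k) (cvec x)))"
    by (intro bounded_iterates_if_eigenvalues_in_unit_disc assms)
  ultimately show ?thesis by (simp add: bounded_iff)
qed

section \<open>The Lyapunov equation of a Hurwitz matrix\<close>

lemma decrements_tendsto_zero:
  fixes a b :: "nat \<Rightarrow> real"
  assumes "bdd_below (range a)" and "\<And>k. 0 \<le> b k" and "\<And>k. a (Suc k) + b k \<le> a k"
  shows "b \<longlonglongrightarrow> 0"
proof -
  have "a (Suc k) \<le> a k" for k
    using assms(2)[of k] assms(3)[of k] by linarith
  then have "decseq a" by (rule decseq_SucI)
  then have "a \<longlonglongrightarrow> (INF k. a k)"
    using assms(1) by (rule LIMSEQ_decseq_INF[rotated])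
  then have "(\<lambda>k. a k - a (Suc k)) \<longlonglongrightarrow> (INF k. a k) - (INF k. a k)"
    by (intro tendsto_diff LIMSEQ_Suc)
  moreover have "b k \<le> a k - a (Suc k)" for k
    using assms(3)[of k] by simp
  ultimately show ?thesis
    using assms(2) by (intro real_tendsto_sandwich[OF _ _ tendsto_const, of 0 b]) auto
qed

lemma invertible_mult_matrix_inv:
  assumes "invertible M"
  shows "M ** matrix_inv M = mat 1" and "matrix_inv M ** M = mat 1"
  using someI_ex[OF assms[unfolded invertible_def]] unfolding matrix_inv_def by auto

lemma hurwitz_invertible_one_minus:
  assumes "hurwitz A"
  shows "invertible (mat 1 - A)"
  unfolding invertible_left_inverse matrix_left_invertible_ker
proof (intro allI impI)
  fix x assume "(mat 1 - A) *v x = 0"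
  then have "cmat A *v cvec x = 1 *s cvec x"
    by (simp add: cmat_mult_cvec matrix_vector_mult_diff_rdistrib)
  moreover have "\<And>\<mu> v. v \<noteq> 0 \<Longrightarrow> cmat A *v v = \<mu> *s v \<Longrightarrow> Re \<mu> < 0"
    using assms unfolding hurwitz_def by blast
  ultimately have "cvec x \<noteq> 0 \<Longrightarrow> Re 1 < (0::real)" by blast
  then show "x = 0" by auto
qed

text \<open>The Cayley transform maps the open left half plane onto the open unit disc, so it turns
  a Hurwitz matrix into a Schur-stable one.\<close>

definition cayley :: "real^'n^'n \<Rightarrow> real^'n^'n" where
  "cayley A = (mat 1 + A) ** matrix_inv (mat 1 - A)"

lemma cayley_mult_one_minus:
  assumes "hurwitz A"
  shows "cayley A *v ((mat 1 - A) *v y) = (mat 1 + A) *v y"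
proof -
  have "cayley A *v ((mat 1 - A) *v y) = (mat 1 + A) *v ((matrix_inv (mat 1 - A) ** (mat 1 - A)) *v y)"
    by (simp add: cayley_def matrix_vector_mul_assoc matrix_mul_assoc)
  then show ?thesis
    using invertible_mult_matrix_inv(2)[OF hurwitz_invertible_one_minus[OF assms]] by simp
qed

lemma cmod_lt_1_if_Re_cayley_inverse_neg:
  assumes "Re ((\<mu> - 1) / (\<mu> + 1)) < 0"
  shows "cmod \<mu> < 1"
proof -
  have "Re ((\<mu> - 1) / (\<mu> + 1)) = ((Re \<mu>)\<^sup>2 + (Im \<mu>)\<^sup>2 - 1) / ((Re \<mu> + 1)\<^sup>2 + (Im \<mu>)\<^sup>2)"
    by (simp add: Re_divide power2_eq_square algebra_simps)
  then have "(Re \<mu>)\<^sup>2 + (Im \<mu>)\<^sup>2 < 1"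
    using assms by (auto simp: divide_less_0_iff not_sum_power2_lt_zero)
  then show ?thesis by (simp add: cmod_def)
qed

lemma cayley_eigenvalue_in_unit_disc:
  assumes hur: "hurwitz A" and v: "v \<noteq> 0" and ev: "cmat (cayley A) *v v = \<mu> *s v"
  shows "cmod \<mu> < 1"
proof -
  define u where "u = cmat (matrix_inv (mat 1 - A)) *v v"
  have "cmat (mat 1 - A) *v u = v" and "cmat (cayley A) *v v = cmat (mat 1 + A) *v u"
    using invertible_mult_matrix_inv(1)[OF hurwitz_invertible_one_minus[OF hur]]
    unfolding u_def cayley_def
    by (simp_all add: matrix_vector_mul_assoc cmat_mult[symmetric] cmat_one)
  then have "u - cmat A *v u = v" and eq: "u + cmat A *v u = \<mu> *s (u - cmat A *v u)"
    using ev by (simp_all add: cmat_diff cmat_add cmat_one matrix_vector_mult_diff_rdistrib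
        matrix_vector_mult_add_rdistrib)
  have "\<mu> + 1 \<noteq> 0"
  proof
    assume "\<mu> + 1 = 0"
    then have "\<mu> = -1" by (simp add: eq_neg_iff_add_eq_0)
    then have "u = 0" using eq by (simp add: Finite_Cartesian_Product.vec_eq_iff algebra_simps)
    with \<open>u - cmat A *v u = v\<close> v show False by simp
  qed
  then have "cmat A *v u = ((\<mu> - 1) / (\<mu> + 1)) *s u"
    using eq by (simp add: Finite_Cartesian_Product.vec_eq_iff field_simps)
  moreover have "u \<noteq> 0" using \<open>u - cmat A *v u = v\<close> v by auto
  ultimately have "Re ((\<mu> - 1) / (\<mu> + 1)) < 0"
    using hur unfolding hurwitz_def by blast
  then show ?thesis by (rule cmod_lt_1_if_Re_cayley_inverse_neg)
qed

text \<open>A continuous-time Lyapunov equation for \<open>A\<close> is a discrete-time one for its Cayley transform.\<close>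

lemma lyapunov_cayley_identity:
  fixes A P Q :: "real^'n^'n"
  assumes lyap: "P ** A + transpose A ** P = - Q"
  shows "((mat 1 + A) *v y) \<bullet> (P *v ((mat 1 + A) *v u))
       = ((mat 1 - A) *v y) \<bullet> (P *v ((mat 1 - A) *v u)) - 2 * (y \<bullet> (Q *v u))"
proof -
  have "(P ** A + transpose A ** P) *v u = P *v (A *v u) + transpose A *v (P *v u)"
    by (simp add: matrix_vector_mult_add_rdistrib matrix_vector_mul_assoc del: transpose_matrix_vector)
  moreover have "y \<bullet> (transpose A *v (P *v u)) = (A *v y) \<bullet> (P *v u)"
    using inner_matrix_vector_transpose[of y "transpose A"] by simp
  ultimately have "y \<bullet> (Q *v u) = - (y \<bullet> (P *v (A *v u)) + (A *v y) \<bullet> (P *v u))"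
    using arg_cong[OF lyap, of "\<lambda>M. y \<bullet> (M *v u)"]
    by (simp add: inner_add_right uminus_matrix_vector_mult del: transpose_matrix_vector)
  then show ?thesis
    by (simp add: matrix_vector_mult_add_rdistrib matrix_vector_mult_diff_rdistrib matrix_vector_right_distrib
        matrix_vector_mult_diff_distrib inner_add_left inner_add_right inner_diff_left inner_diff_right
        algebra_simps)
qed

lemma bounded_quadratic_form_image:
  assumes "bounded S"
  shows "bounded ((\<lambda>x::real^'n. x \<bullet> (M *v x)) ` S)"
proof -
  obtain R where R: "\<And>x. x \<in> S \<Longrightarrow> norm x \<le> R" using assms unfolding bounded_iff by blast
  obtain K where K: "K > 0" "\<And>x::real^'n. \<bar>x \<bullet> (M *v x)\<bar> \<le> K * (norm x)\<^sup>2"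
    using quadratic_form_upper_bound by blast
  have "\<bar>x \<bullet> (M *v x)\<bar> \<le> K * R\<^sup>2" if "x \<in> S" for x
    using K(2)[of x] mult_left_mono[OF power_mono[OF R[OF that] norm_ge_zero, of 2] less_imp_le[OF K(1)]]
    by linarith
  then show ?thesis unfolding bounded_iff by auto
qed

lemma one_minus_mult_inverse:
  assumes "hurwitz A"
  shows "(mat 1 - A) *v (matrix_inv (mat 1 - A) *v z) = z"
  using invertible_mult_matrix_inv(1)[OF hurwitz_invertible_one_minus[OF assms]]
  by (simp add: matrix_vector_mul_assoc)

lemma cayley_lyapunov_step:
  assumes hur: "hurwitz A" and lyap: "P ** A + transpose A ** P = - Q"
  shows "(cayley A *v z) \<bullet> (P *v (cayley A *v w))
       = z \<bullet> (P *v w) - 2 * ((matrix_inv (mat 1 - A) *v z) \<bullet> (Q *v (matrix_inv (mat 1 - A) *v w)))"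
  using lyapunov_cayley_identity[OF lyap, of "matrix_inv (mat 1 - A) *v z" "matrix_inv (mat 1 - A) *v w"]
  by (simp add: one_minus_mult_inverse[OF hur] cayley_mult_one_minus[OF hur, symmetric])

lemma cayley_iterates_tendsto_zero:
  fixes A P Q :: "real^'n^'n"
  assumes hur: "hurwitz A" and Q: "pos_def_mat Q" and lyap: "P ** A + transpose A ** P = - Q"
  shows "(\<lambda>k. ((*v) (cayley A) ^^ k) x) \<longlonglongrightarrow> 0"
proof -
  define C where "C = matrix_inv (mat 1 - A)"
  define xs where "xs k = ((*v) (cayley A) ^^ k) x" for k
  obtain q where q: "q > 0" "\<And>y. q * (norm y)\<^sup>2 \<le> y \<bullet> (Q *v y)"
    using pos_def_mat_lower_bound[OF Q] by blast
  have "bounded (range xs)"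
    unfolding xs_def
    by (intro bounded_real_iterates_if_eigenvalues_in_unit_disc cayley_eigenvalue_in_unit_disc[OF hur])
  then have "bounded ((\<lambda>z. z \<bullet> (P *v z)) ` range xs)"
    by (rule bounded_quadratic_form_image)
  then have "bdd_below (range (\<lambda>k. xs k \<bullet> (P *v xs k)))"
    by (simp add: bounded_imp_bdd_below image_image)
  moreover have "xs (Suc k) \<bullet> (P *v xs (Suc k)) + 2 * q * (norm (C *v xs k))\<^sup>2 \<le> xs k \<bullet> (P *v xs k)" for k
    using cayley_lyapunov_step[OF hur lyap, of "xs k" "xs k"] q(2)[of "C *v xs k"]
    by (simp add: xs_def C_def)
  ultimately have "(\<lambda>k. 2 * q * (norm (C *v xs k))\<^sup>2) \<longlonglongrightarrow> 0"
    using q(1) by (intro decrements_tendsto_zero) auto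
  then have "(\<lambda>k. sqrt ((1 / (2 * q)) * (2 * q * (norm (C *v xs k))\<^sup>2))) \<longlonglongrightarrow> sqrt ((1 / (2 * q)) * 0)"
    by (intro tendsto_intros)
  then have "(\<lambda>k. C *v xs k) \<longlonglongrightarrow> 0"
    using q(1) by (simp add: tendsto_norm_zero_iff)
  then have "(\<lambda>k. (mat 1 - A) *v (C *v xs k)) \<longlonglongrightarrow> 0"
    by (rule bounded_linear.tendsto_zero[OF matrix_vector_mul_bounded_linear])
  then show ?thesis
    unfolding C_def xs_def one_minus_mult_inverse[OF hur] .
qed

text \<open>\<open>V(x) = x\<^sup>T P x\<close> strictly decreases along the iterates of the Cayley transform, which
  tend to \<open>0\<close>; hence \<open>V(x) > V(0) = 0\<close>.\<close>

lemma lyapunov_equation_pos_def: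
  fixes A P Q :: "real^'n^'n"
  assumes hur: "hurwitz A" and Q: "pos_def_mat Q" and lyap: "P ** A + transpose A ** P = - Q"
  shows "pos_def_mat P"
  unfolding pos_def_mat_def
proof (intro allI impI)
  fix x :: "real^'n" assume "x \<noteq> 0"
  define C where "C = matrix_inv (mat 1 - A)"
  define V where "V z = z \<bullet> (P *v z)" for z
  define xs where "xs k = ((*v) (cayley A) ^^ k) x" for k
  have step: "V (cayley A *v z) = V z - 2 * ((C *v z) \<bullet> (Q *v (C *v z)))" for z
    unfolding V_def C_def by (rule cayley_lyapunov_step[OF hur lyap])
  have Q_nonneg: "0 \<le> y \<bullet> (Q *v y)" for y
    using Q unfolding pos_def_mat_def by (cases "y = 0") (auto intro: less_imp_le)
  have "V (xs (Suc k)) \<le> V (xs k)" for k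
    using step[of "xs k"] Q_nonneg[of "C *v xs k"] by (simp add: xs_def)
  then have "decseq (\<lambda>k. V (xs k))"
    by (rule decseq_SucI)
  moreover have "(\<lambda>k. V (xs k)) \<longlonglongrightarrow> V 0"
    unfolding V_def xs_def
    by (intro tendsto_inner bounded_linear.tendsto[OF matrix_vector_mul_bounded_linear]
        cayley_iterates_tendsto_zero[OF hur Q lyap])
  ultimately have "0 \<le> V (xs 1)"
    using decseq_ge by (fastforce simp: V_def)
  moreover have "C *v x \<noteq> 0"
    using one_minus_mult_inverse[OF hur, of x] \<open>x \<noteq> 0\<close> unfolding C_def by auto
  then have "(C *v x) \<bullet> (Q *v (C *v x)) > 0"
    using Q unfolding pos_def_mat_def by blast
  ultimately show "x \<bullet> (P *v x) > 0"
    using step[of x] unfolding xs_def V_def by simp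
qed

text \<open>The antisymmetric part \<open>z\<^sup>T P w - w\<^sup>T P z\<close> is invariant under the Cayley transform
  and vanishes in the limit.\<close>

lemma lyapunov_equation_symmetric:
  fixes A P Q :: "real^'n^'n"
  assumes hur: "hurwitz A" and Q: "pos_def_mat Q" "symmetric_mat Q"
    and lyap: "P ** A + transpose A ** P = - Q"
  shows "symmetric_mat P"
proof -
  define \<beta> where "\<beta> z w = z \<bullet> (P *v w) - w \<bullet> (P *v z)" for z w
  have "\<beta> (cayley A *v z) (cayley A *v w) = \<beta> z w" for z w
    unfolding \<beta>_def cayley_lyapunov_step[OF hur lyap]
    using symmetric_mat_inner_commute[OF Q(2)] by simp
  then have invariant: "\<beta> (((*v) (cayley A) ^^ k) z) (((*v) (cayley A) ^^ k) w) = \<beta> z w" for k z w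
    by (induction k) simp_all
  have "\<beta> z w = 0" for z w
  proof -
    have "(\<lambda>k. \<beta> (((*v) (cayley A) ^^ k) z) (((*v) (cayley A) ^^ k) w)) \<longlonglongrightarrow> \<beta> 0 0"
      unfolding \<beta>_def
      by (intro tendsto_diff tendsto_inner bounded_linear.tendsto[OF matrix_vector_mul_bounded_linear]
          cayley_iterates_tendsto_zero[OF hur Q(1) lyap])
    then have "(\<lambda>k. \<beta> z w) \<longlonglongrightarrow> \<beta> 0 0" by (simp only: invariant)
    then show ?thesis by (simp add: LIMSEQ_const_iff \<beta>_def)
  qed
  moreover have "w \<bullet> (transpose P *v z) = z \<bullet> (P *v w)" for z w
    using inner_matrix_vector_transpose[of w "transpose P" z] by (simp add: inner_commute del: transpose_matrix_vector)
  ultimately have "(transpose P *v z - P *v z) \<bullet> w = 0" for z w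
    unfolding \<beta>_def by (simp add: inner_diff_left inner_diff_right inner_commute del: transpose_matrix_vector)
  then have "transpose P *v z = P *v z" for z
    using inner_eq_zero_iff right_minus_eq by metis
  then show ?thesis
    unfolding symmetric_mat_def by (simp add: matrix_eq del: transpose_matrix_vector)
qed

lemma lyapunov_equation_quadratic_form:
  fixes A P Q :: "real^'n^'n"
  assumes P: "symmetric_mat P" and lyap: "P ** A + transpose A ** P = - Q"
  shows "2 * (x \<bullet> (P *v (A *v x))) = - (x \<bullet> (Q *v x))"
proof -
  have "x \<bullet> ((P ** A + transpose A ** P) *v x) = x \<bullet> (P *v (A *v x)) + (A *v x) \<bullet> (P *v x)"
    using inner_matrix_vector_transpose[of x "transpose A" "P *v x"]
    by (simp add: matrix_vector_mult_add_rdistrib matrix_vector_mul_assoc[symmetric] inner_add_right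
        del: transpose_matrix_vector)
  then show ?thesis
    using symmetric_mat_inner_commute[OF P, of "A *v x" x] lyap by (simp add: uminus_matrix_vector_mult)
qed

lemma lyapunov_equation_local_decay:
  fixes A P Q :: "real^'n^'n"
  assumes P: "symmetric_mat P" and Q: "symmetric_mat Q" and lyap: "P ** A + transpose A ** P = - Q"
    and bound: "2 * (x \<bullet> (P *v (f x - A *v x))) \<le> r * (norm x)\<^sup>2"
  shows "2 * (x \<bullet> (P *v f x)) \<le> - (lambda_min Q - r) * (norm x)\<^sup>2"
proof -
  have "2 * (x \<bullet> (P *v f x)) = - (x \<bullet> (Q *v x)) + 2 * (x \<bullet> (P *v (f x - A *v x)))"
    using lyapunov_equation_quadratic_form[OF P lyap, of x]
    by (simp add: matrix_vector_mult_diff_distrib inner_diff_right)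
  then show ?thesis
    using lambda_min_le_quadratic_form[OF Q, of x] bound by (simp add: algebra_simps)
qed

section \<open>Forward invariance along solutions\<close>

lemma continuous_on_mem_closed_from_left:
  fixes \<phi> :: "real \<Rightarrow> 'a::topological_space"
  assumes cont: "continuous_on {a..b} \<phi>" and S: "closed S" and s: "a < s" "s \<le> b"
    and below: "\<And>\<tau>. a \<le> \<tau> \<Longrightarrow> \<tau> < s \<Longrightarrow> \<phi> \<tau> \<in> S"
  shows "\<phi> s \<in> S"
proof -
  have "(\<phi> \<longlongrightarrow> \<phi> s) (at s within {a..b})"
    using cont s by (simp add: continuous_on_def)
  then have "(\<phi> \<longlongrightarrow> \<phi> s) (at s within {a..<s})"
    by (rule tendsto_within_subset) (use s in auto)
  moreover have "at s within {a..<s} \<noteq> bot" using s by (simp add: at_within_eq_bot_iff)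
  ultimately show ?thesis
    using below by (intro Lim_in_closed_set[OF S]) (auto simp: eventually_at_filter)
qed

lemma continuous_forward_induction:
  fixes \<phi> :: "real \<Rightarrow> 'a::topological_space"
  assumes ab: "a \<le> b" and cont: "continuous_on {a..b} \<phi>" and S: "closed S" and start: "\<phi> a \<in> S"
    and step: "\<And>t. a \<le> t \<Longrightarrow> t < b \<Longrightarrow> \<phi> ` {a..t} \<subseteq> S \<Longrightarrow> \<forall>\<^sub>F s in at_right t. \<phi> s \<in> S"
  shows "\<phi> ` {a..b} \<subseteq> S"
proof -
  define Z where "Z = {t \<in> {a..b}. \<phi> ` {a..t} \<subseteq> S}"
  define s where "s = Sup Z"
  have aZ: "a \<in> Z" and bdd: "bdd_above Z" using ab start unfolding Z_def by auto
  have as: "a \<le> s" unfolding s_def using aZ bdd by (rule cSup_upper)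
  have sb: "s \<le> b" unfolding s_def using aZ by (intro cSup_least) (auto simp: Z_def)
  have below: "\<phi> \<tau> \<in> S" if "a \<le> \<tau>" "\<tau> < s" for \<tau>
  proof -
    obtain t where "t \<in> Z" "\<tau> < t" using \<open>\<tau> < s\<close> less_cSup_iff[OF _ bdd] aZ unfolding s_def by blast
    with that show ?thesis unfolding Z_def by auto
  qed
  have "\<phi> s \<in> S"
  proof (cases "a = s")
    case False
    with as show ?thesis using continuous_on_mem_closed_from_left[OF cont S _ sb below] by simp
  qed (use start in simp)
  with below have upto_s: "\<phi> ` {a..s} \<subseteq> S" by (force simp: le_less)
  have "s = b"
  proof (rule ccontr)
    assume "s \<noteq> b"
    with sb have "s < b" by simp
    from step[OF as this upto_s] obtain d where "d > s" and d: "\<And>\<tau>. s < \<tau> \<Longrightarrow> \<tau> < d \<Longrightarrow> \<phi> \<tau> \<in> S"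
      unfolding eventually_at_right_field by blast
    define t' where "t' = min ((s + d) / 2) b"
    have "s < t'" using \<open>d > s\<close> \<open>s < b\<close> unfolding t'_def by simp
    moreover have "\<phi> \<tau> \<in> S" if "a \<le> \<tau>" "\<tau> \<le> t'" for \<tau>
    proof (cases "\<tau> \<le> s")
      case False
      then show ?thesis using d \<open>\<tau> \<le> t'\<close> \<open>d > s\<close> unfolding t'_def by simp
    qed (use upto_s that in auto)
    then have "t' \<in> Z" using as \<open>s < t'\<close> unfolding Z_def t'_def by auto
    then have "t' \<le> s" unfolding s_def using bdd by (rule cSup_upper)
    ultimately show False by simp
  qed
  with upto_s show ?thesis by simp
qed

lemma at_right_le_at_within_nonneg: "0 \<le> t \<Longrightarrow> at_right t \<le> at (t::real) within {0..}"
  by (rule at_le) auto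

lemma eventually_less_if_has_real_derivative_neg:
  assumes "(g has_real_derivative l) (at t within {0..})" "l < 0" "0 \<le> t"
  shows "\<forall>\<^sub>F s in at_right t. g s < g t"
proof -
  obtain d where "d > 0" and d: "\<forall>h>0. t + h \<in> {0..} \<longrightarrow> h < d \<longrightarrow> g (t + h) < g t"
    using has_real_derivative_neg_dec_right[OF assms(1,2)] by blast
  have "g s < g t" if "t < s" "s < t + d" for s
    using d[rule_format, of "s - t"] that assms(3) by simp
  then show ?thesis
    unfolding eventually_at_right_field using \<open>d > 0\<close> by (intro exI[of _ "t + d"]) simp
qed

lemma eventually_le_if_has_real_derivative:
  fixes g :: "real \<Rightarrow> real"
  assumes dg: "(g has_real_derivative l) (at t within {0..})" and t: "0 \<le> t"
    and le: "g t \<le> c" and neg: "g t = c \<Longrightarrow> l < 0"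
  shows "\<forall>\<^sub>F s in at_right t. g s \<le> c"
proof (cases "g t = c")
  case True
  have "\<forall>\<^sub>F s in at_right t. g s < g t"
    by (rule eventually_less_if_has_real_derivative_neg[OF dg neg[OF True] t])
  then show ?thesis by (rule eventually_mono) (use True in simp)
next
  case False
  with le have "g t < c" by simp
  with DERIV_continuous[OF dg] have "\<forall>\<^sub>F s in at t within {0..}. g s < c"
    unfolding continuous_within by (rule order_tendstoD(2))
  then have "\<forall>\<^sub>F s in at_right t. g s < c"
    by (rule filter_leD[OF at_right_le_at_within_nonneg[OF t]])
  then show ?thesis by (rule eventually_mono) simp
qed

lemma is_solution_continuous_within:
  assumes "is_solution F x0 \<phi>" "0 \<le> t"
  shows "continuous (at t within {0..}) \<phi>"
  using assms by (intro has_vector_derivative_continuous) (auto simp: is_solution_def)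

lemma is_solution_continuous_on:
  "is_solution F x0 \<phi> \<Longrightarrow> continuous_on {0..} \<phi>"
  by (auto simp: continuous_on_eq_continuous_within intro: is_solution_continuous_within)

lemma is_solution_has_real_derivative_comp:
  assumes sol: "is_solution F x0 \<phi>" and t: "0 \<le> t" and W: "(W has_derivative W') (at (\<phi> t))"
  shows "((\<lambda>s. W (\<phi> s)) has_real_derivative W' (F (\<phi> t))) (at t within {0..})"
proof -
  have "(\<phi> has_derivative (\<lambda>h. h *\<^sub>R F (\<phi> t))) (at t within {0..})"
    using sol t by (simp add: is_solution_def has_vector_derivative_def)
  from has_derivative_compose[OF this W]
  have "((\<lambda>s. W (\<phi> s)) has_derivative (\<lambda>h. W' (h *\<^sub>R F (\<phi> t)))) (at t within {0..})" .
  moreover have "(\<lambda>h. W' (h *\<^sub>R F (\<phi> t))) = (*) (W' (F (\<phi> t)))"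
    using linear_cmul[OF has_derivative_linear[OF W]] by (auto simp: fun_eq_iff)
  ultimately show ?thesis by (simp add: has_field_derivative_def)
qed

lemma is_solution_shift:
  assumes sol: "is_solution F x0 \<phi>" and "0 \<le> t0"
  shows "is_solution F (\<phi> t0) (\<lambda>t. \<phi> (t0 + t))"
  unfolding is_solution_def
proof safe
  fix t :: real assume "0 \<le> t"
  have "((+) t0 has_vector_derivative 1) (at t within {0..})"
    using has_vector_derivative_add[OF has_vector_derivative_const has_vector_derivative_id] by simp
  moreover have "(\<phi> has_vector_derivative F (\<phi> (t0 + t))) (at (t0 + t) within {0..})"
    using sol \<open>0 \<le> t\<close> \<open>0 \<le> t0\<close> unfolding is_solution_def by simp
  then have "(\<phi> has_vector_derivative F (\<phi> (t0 + t))) (at (t0 + t) within (+) t0 ` {0..})"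
    by (rule has_vector_derivative_within_subset) (use \<open>0 \<le> t0\<close> in auto)
  ultimately have "((\<phi> \<circ> (+) t0) has_vector_derivative 1 *\<^sub>R F (\<phi> (t0 + t))) (at t within {0..})"
    by (rule vector_diff_chain_within)
  then show "((\<lambda>t. \<phi> (t0 + t)) has_vector_derivative F (\<phi> (t0 + t))) (at t within {0..})"
    by (simp add: o_def)
qed simp

lemma has_derivative_quadratic_form:
  assumes "symmetric_mat P"
  shows "((\<lambda>x::real^'n. x \<bullet> (P *v x)) has_derivative (\<lambda>h. 2 * (x \<bullet> (P *v h)))) (at x)"
proof -
  have "((*v) P has_derivative (*v) P) (at x)"
    by (rule bounded_linear_imp_has_derivative[OF matrix_vector_mul_bounded_linear])
  from has_derivative_inner[OF has_derivative_ident this]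
  have "((\<lambda>x. x \<bullet> (P *v x)) has_derivative (\<lambda>h. x \<bullet> (P *v h) + h \<bullet> (P *v x))) (at x)" .
  then show ?thesis
    using symmetric_mat_inner_commute[OF assms, of _ x] by simp
qed

text \<open>A solution could only leave through the level set \<open>W = c\<close>, where \<open>W\<close> strictly decreases.\<close>

lemma is_solution_sublevel_invariant:
  fixes F :: "'a::real_normed_vector \<Rightarrow> 'a" and W :: "'a \<Rightarrow> real"
  assumes sol: "is_solution F x0 \<phi>" and X: "closed X"
    and W: "\<And>x. x \<in> X \<Longrightarrow> (W has_derivative W' x) (at x)"
    and interior: "{x \<in> X. W x \<le> c} \<subseteq> interior X"
    and boundary: "\<And>x. x \<in> X \<Longrightarrow> W x = c \<Longrightarrow> W' x (F x) < 0"
    and x0: "x0 \<in> X" "W x0 \<le> c" and t: "0 \<le> t"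
  shows "\<phi> t \<in> {x \<in> X. W x \<le> c}"
proof -
  let ?K = "{x \<in> X. W x \<le> c}"
  have "continuous_on X W"
    by (intro continuous_at_imp_continuous_on ballI has_derivative_continuous[OF W])
  then have "closed ?K"
    using continuous_closed_preimage[OF _ X closed_atMost, of W c] by (simp add: vimage_def Int_def)
  have "\<phi> ` {0..t} \<subseteq> ?K"
  proof (rule continuous_forward_induction[OF t _ \<open>closed ?K\<close>])
    show "continuous_on {0..t} \<phi>"
      using is_solution_continuous_on[OF sol] by (rule continuous_on_subset) auto
    show "\<phi> 0 \<in> ?K" using sol x0 by (simp add: is_solution_def)
    fix \<tau> assume \<tau>: "0 \<le> \<tau>" "\<tau> < t" and "\<phi> ` {0..\<tau>} \<subseteq> ?K"
    moreover have "\<tau> \<in> {0..\<tau>}" using \<tau>(1) by simp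
    ultimately have K: "\<phi> \<tau> \<in> ?K" by blast
    have "\<forall>\<^sub>F s in at \<tau> within {0..}. \<phi> s \<in> interior X"
      using is_solution_continuous_within[OF sol \<tau>(1)] interior K
      unfolding continuous_within by (intro topological_tendstoD) auto
    then have "\<forall>\<^sub>F s in at_right \<tau>. \<phi> s \<in> interior X"
      by (rule filter_leD[OF at_right_le_at_within_nonneg[OF \<tau>(1)]])
    moreover have "\<forall>\<^sub>F s in at_right \<tau>. W (\<phi> s) \<le> c"
      using K boundary[of "\<phi> \<tau>"]
      by (intro eventually_le_if_has_real_derivative[OF is_solution_has_real_derivative_comp[OF sol \<tau>(1) W] \<tau>(1)])
        auto
    ultimately show "\<forall>\<^sub>F s in at_right \<tau>. \<phi> s \<in> ?K"
      by (rule eventually_elim2) (use interior_subset in blast)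
  qed
  moreover have "t \<in> {0..t}" using t by simp
  ultimately show ?thesis by blast
qed

lemma is_solution_cong:
  assumes "is_solution F x0 \<phi>" and "\<And>t. 0 \<le> t \<Longrightarrow> F (\<phi> t) = G (\<phi> t)"
  shows "is_solution G x0 \<phi>"
  using assms by (simp add: is_solution_def)

section \<open>Existence of solutions\<close>

lemma exp_mult_has_integral:
  fixes K t :: real
  assumes "K \<noteq> 0" "0 \<le> t"
  shows "((\<lambda>s. exp (K * s)) has_integral (exp (K * t) - 1) / K) {0..t}"
proof -
  have "((\<lambda>s. exp (K * s) / K) has_vector_derivative exp (K * s)) (at s within {0..t})" for s
    using assms(1) by (auto intro!: derivative_eq_intros simp: has_real_derivative_iff_has_vector_derivative[symmetric])
  from fundamental_theorem_of_calculus[OF assms(2) this] show ?thesis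
    by (simp add: diff_divide_distrib)
qed

lemma exp_integral_factor_le:
  fixes L K t :: real
  assumes "0 \<le> L" "0 < K" "2 * L \<le> K"
  shows "L * ((exp (K * t) - 1) / K) \<le> exp (K * t) / 2"
proof -
  have "L * ((exp (K * t) - 1) / K) \<le> L * (exp (K * t) / K)"
    using assms by (intro mult_left_mono divide_right_mono) auto
  also have "\<dots> \<le> K / 2 * (exp (K * t) / K)"
    using assms by (intro mult_right_mono) auto
  finally show ?thesis using assms(2) by simp
qed

lemma lipschitz_exp_weighted_integral_bound:
  fixes F :: "'a::banach \<Rightarrow> 'a"
  assumes lip: "L-lipschitz_on UNIV F" and K: "0 < K" "2 * L \<le> K" and t: "0 \<le> t"
    and cont: "continuous_on {0..t} \<psi>\<^sub>1" "continuous_on {0..t} \<psi>\<^sub>2"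
    and dist: "\<And>s. s \<in> {0..t} \<Longrightarrow> norm (\<psi>\<^sub>1 s - \<psi>\<^sub>2 s) \<le> d"
  shows "norm (integral {0..t} (\<lambda>s. F (exp (K * s) *\<^sub>R \<psi>\<^sub>1 s)) - integral {0..t} (\<lambda>s. F (exp (K * s) *\<^sub>R \<psi>\<^sub>2 s)))
       \<le> exp (K * t) / 2 * d"
proof -
  have Fcont: "continuous_on UNIV F" using lip by (rule lipschitz_on_continuous_on)
  have int: "(\<lambda>s. F (exp (K * s) *\<^sub>R \<psi> s)) integrable_on {0..t}" if "continuous_on {0..t} \<psi>" for \<psi>
    by (intro integrable_continuous_real continuous_on_compose2[OF Fcont] continuous_intros that) auto
  have bound: "((\<lambda>s. L * d * exp (K * s)) has_integral L * d * ((exp (K * t) - 1) / K)) {0..t}"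
    using exp_mult_has_integral[OF _ t, of K] K by (intro has_integral_mult_right) simp
  have "norm (integral {0..t} (\<lambda>s. F (exp (K * s) *\<^sub>R \<psi>\<^sub>1 s)) - integral {0..t} (\<lambda>s. F (exp (K * s) *\<^sub>R \<psi>\<^sub>2 s)))
      = norm (integral {0..t} (\<lambda>s. F (exp (K * s) *\<^sub>R \<psi>\<^sub>1 s) - F (exp (K * s) *\<^sub>R \<psi>\<^sub>2 s)))"
    by (simp add: integral_diff[OF int[OF cont(1)] int[OF cont(2)]])
  also have "\<dots> \<le> L * d * ((exp (K * t) - 1) / K)"
  proof (rule integral_norm_bound_integral[OF integrable_diff[OF int[OF cont(1)] int[OF cont(2)]]
        has_integral_integrable[OF bound], unfolded integral_unique[OF bound]])
    fix s assume s: "s \<in> {0..t}"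
    have "norm (F (exp (K * s) *\<^sub>R \<psi>\<^sub>1 s) - F (exp (K * s) *\<^sub>R \<psi>\<^sub>2 s)) \<le> L * (exp (K * s) * norm (\<psi>\<^sub>1 s - \<psi>\<^sub>2 s))"
      using lipschitz_onD[OF lip, of "exp (K * s) *\<^sub>R \<psi>\<^sub>1 s" "exp (K * s) *\<^sub>R \<psi>\<^sub>2 s"]
      by (simp add: dist_norm scaleR_diff_right[symmetric])
    also have "\<dots> \<le> L * (exp (K * s) * d)"
      using dist[OF s] lipschitz_on_nonneg[OF lip] by (intro mult_left_mono) auto
    also have "\<dots> = L * d * exp (K * s)" by simp
    finally show "norm (F (exp (K * s) *\<^sub>R \<psi>\<^sub>1 s) - F (exp (K * s) *\<^sub>R \<psi>\<^sub>2 s)) \<le> L * d * exp (K * s)" .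
  qed
  also have "\<dots> = L * ((exp (K * t) - 1) / K) * d" by simp
  also have "\<dots> \<le> exp (K * t) / 2 * d"
    using exp_integral_factor_le[OF lipschitz_on_nonneg[OF lip] K, of t] dist[of 0] t
    by (intro mult_right_mono) (auto intro: order.trans[OF norm_ge_zero])
  finally show ?thesis .
qed

lemma continuous_on_integral_upto_max_0:
  fixes g :: "real \<Rightarrow> 'a::banach"
  assumes "continuous_on UNIV g"
  shows "continuous_on UNIV (\<lambda>t. integral {0..max 0 t} g)"
proof (rule continuous_at_imp_continuous_on, rule ballI)
  fix x :: real
  define R where "R = \<bar>x\<bar> + 1"
  have "continuous_on {0..R} (\<lambda>u. integral {0..u} g)"
    by (intro indefinite_integral_continuous_1 integrable_continuous_real continuous_on_subset[OF assms]) auto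
  then have "continuous_on {-R..R} (\<lambda>t. integral {0..max 0 t} g)"
    by (rule continuous_on_compose2) (auto intro!: continuous_intros simp: R_def)
  then show "isCont (\<lambda>t. integral {0..max 0 t} g) x"
    by (rule continuous_on_interior) (auto simp: R_def)
qed

text \<open>In the coordinates \<open>\<psi>(t) = e\<^sup>-\<^sup>K\<^sup>t \<phi>(t)\<close> the Picard operator of \<open>x' = F x\<close> is a contraction
  for the sup norm once \<open>K \<ge> 2L\<close>. The weight is frozen for \<open>t < 0\<close>, so that \<open>\<psi>\<close> can be a
  bounded continuous function on the whole real line.\<close>

definition weighted_picard :: "('a::banach \<Rightarrow> 'a) \<Rightarrow> real \<Rightarrow> 'a \<Rightarrow> (real \<Rightarrow> 'a) \<Rightarrow> real \<Rightarrow> 'a" where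
  "weighted_picard F K x0 \<psi> t =
     exp (- K * max 0 t) *\<^sub>R (x0 + integral {0..max 0 t} (\<lambda>s. F (exp (K * s) *\<^sub>R \<psi> s)))"

lemma continuous_on_weighted_picard:
  assumes "continuous_on UNIV F" "continuous_on UNIV \<psi>"
  shows "continuous_on UNIV (weighted_picard F K x0 \<psi>)"
  unfolding weighted_picard_def
  by (intro continuous_intros continuous_on_integral_upto_max_0 continuous_on_compose2[OF assms(1)]
      continuous_on_subset[OF assms(2)]) auto

lemma weighted_picard_dist:
  fixes F :: "'a::banach \<Rightarrow> 'a"
  assumes lip: "L-lipschitz_on UNIV F" and K: "0 < K" "2 * L \<le> K"
    and cont: "continuous_on UNIV \<psi>\<^sub>1" "continuous_on UNIV \<psi>\<^sub>2"
    and dist: "\<And>s. norm (\<psi>\<^sub>1 s - \<psi>\<^sub>2 s) \<le> d"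
  shows "norm (weighted_picard F K x0 \<psi>\<^sub>1 t - weighted_picard F K x0 \<psi>\<^sub>2 t) \<le> d / 2"
proof -
  define t' where "t' = max 0 t"
  have "norm (weighted_picard F K x0 \<psi>\<^sub>1 t - weighted_picard F K x0 \<psi>\<^sub>2 t)
      = exp (- K * t') * norm (integral {0..t'} (\<lambda>s. F (exp (K * s) *\<^sub>R \<psi>\<^sub>1 s))
                                - integral {0..t'} (\<lambda>s. F (exp (K * s) *\<^sub>R \<psi>\<^sub>2 s)))"
    unfolding weighted_picard_def t'_def[symmetric] by (simp add: scaleR_diff_right[symmetric])
  also have "\<dots> \<le> exp (- K * t') * (exp (K * t') / 2 * d)"
    using lipschitz_exp_weighted_integral_bound[OF lip K, of t' \<psi>\<^sub>1 \<psi>\<^sub>2 d] cont dist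
    by (intro mult_left_mono) (auto intro: continuous_on_subset simp: t'_def)
  also have "\<dots> = d / 2"
    by (simp add: exp_minus field_simps)
  finally show ?thesis .
qed

lemma weighted_picard_norm_le:
  fixes F :: "'a::banach \<Rightarrow> 'a"
  assumes lip: "L-lipschitz_on UNIV F" and K: "0 < K" "2 * L \<le> K" and F0: "F 0 = 0"
    and cont: "continuous_on UNIV \<psi>" and bound: "\<And>s. norm (\<psi> s) \<le> d"
  shows "norm (weighted_picard F K x0 \<psi> t) \<le> norm x0 + d / 2"
proof -
  have "exp (- K * max 0 t) \<le> 1" using K by simp
  then have "norm (weighted_picard F K x0 (\<lambda>_. 0) t) \<le> norm x0"
    by (simp add: weighted_picard_def F0 mult_left_le_one_le)
  moreover have "norm (weighted_picard F K x0 \<psi> t - weighted_picard F K x0 (\<lambda>_. 0) t) \<le> d / 2"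
    using bound by (intro weighted_picard_dist[OF lip K cont continuous_on_const]) simp
  ultimately show ?thesis
    using norm_triangle_sub[of "weighted_picard F K x0 \<psi> t" "weighted_picard F K x0 (\<lambda>_. 0) t"] by linarith
qed

lemma integral_equation_imp_is_solution:
  fixes \<phi> :: "real \<Rightarrow> 'a::banach"
  assumes cont: "continuous_on {0..} (\<lambda>s. F (\<phi> s))"
    and eq: "\<And>t. 0 \<le> t \<Longrightarrow> \<phi> t = x0 + integral {0..t} (\<lambda>s. F (\<phi> s))"
  shows "is_solution F x0 \<phi>"
  unfolding is_solution_def
proof safe
  show "\<phi> 0 = x0" using eq[of 0] by simp
  fix t :: real assume t: "0 \<le> t"
  have "((\<lambda>u. x0 + integral {0..u} (\<lambda>s. F (\<phi> s))) has_vector_derivative F (\<phi> t)) (at t within {0..t + 1})"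
    using integral_has_vector_derivative[OF continuous_on_subset[OF cont], of 0 "t + 1" t] t
    by (auto intro!: derivative_eq_intros)
  moreover have "at t within {0..t + 1} = at t within {0..}"
    by (rule at_within_nhd[where S = "{t - 1 <..< t + 1}"]) auto
  ultimately show "(\<phi> has_vector_derivative F (\<phi> t)) (at t within {0..})"
    by (intro has_vector_derivative_transform[OF _ eq]) (use t in auto)
qed

lemma lipschitz_ode_solution_exists:
  fixes F :: "'a::banach \<Rightarrow> 'a"
  assumes lip: "L-lipschitz_on UNIV F" and F0: "F 0 = 0"
  shows "\<exists>\<phi>. is_solution F x0 \<phi>"
proof -
  define K where "K = 2 * L + 1"
  have K: "0 < K" "2 * L \<le> K" using lipschitz_on_nonneg[OF lip] unfolding K_def by auto
  have Fcont: "continuous_on UNIV F" using lip by (rule lipschitz_on_continuous_on)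
  let ?T = "weighted_picard F K x0"
  have bounded: "?T \<psi> \<in> bcontfun" for \<psi> :: "real \<Rightarrow>\<^sub>C 'a"
    using weighted_picard_norm_le[OF lip K F0 continuous_on_apply_bcontfun norm_bounded]
    by (intro bcontfun_normI[OF continuous_on_weighted_picard[OF Fcont continuous_on_apply_bcontfun]])
  define T where "T \<psi> = Bcontfun (?T (apply_bcontfun \<psi>))" for \<psi> :: "real \<Rightarrow>\<^sub>C 'a"
  have T: "apply_bcontfun (T \<psi>) = ?T \<psi>" for \<psi>
    unfolding T_def using bounded by (simp add: Bcontfun_inverse)
  have "dist (T \<psi>\<^sub>1) (T \<psi>\<^sub>2) \<le> 1 / 2 * dist \<psi>\<^sub>1 \<psi>\<^sub>2" for \<psi>\<^sub>1 \<psi>\<^sub>2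
    using weighted_picard_dist[OF lip K continuous_on_apply_bcontfun continuous_on_apply_bcontfun]
    by (intro dist_bound) (simp add: T dist_norm dist_bounded[of \<psi>\<^sub>1 _ \<psi>\<^sub>2, unfolded dist_norm])
  then obtain \<psi> where fixed: "T \<psi> = \<psi>"
    using banach_fix_type[of "1 / 2" T] by auto
  define \<phi> where "\<phi> t = exp (K * max 0 t) *\<^sub>R apply_bcontfun \<psi> t" for t
  show ?thesis
  proof (intro exI integral_equation_imp_is_solution)
    show "continuous_on {0..} (\<lambda>s. F (\<phi> s))"
      unfolding \<phi>_def by (intro continuous_on_compose2[OF Fcont] continuous_intros) auto
    fix t :: real assume "0 \<le> t"
    have "\<phi> t = exp (K * t) *\<^sub>R ?T \<psi> t"
      using fixed T[of \<psi>] \<open>0 \<le> t\<close> unfolding \<phi>_def by simp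
    also have "\<dots> = x0 + integral {0..t} (\<lambda>s. F (exp (K * s) *\<^sub>R \<psi> s))"
      using \<open>0 \<le> t\<close> by (simp add: weighted_picard_def exp_minus)
    also have "\<dots> = x0 + integral {0..t} (\<lambda>s. F (\<phi> s))"
      by (intro arg_cong[where f = "(+) x0"] integral_cong) (simp add: \<phi>_def)
    finally show "\<phi> t = x0 + integral {0..t} (\<lambda>s. F (\<phi> s))" .
  qed
qed

lemma C1_lipschitz_on_bounded_extension:
  fixes f :: "'a::euclidean_space \<Rightarrow> 'a"
  assumes f_deriv: "\<And>x. (f has_derivative blinfun_apply (f' x)) (at x)"
    and f'_cont: "continuous_on UNIV f'" and S: "bounded S"
  obtains L F where "L-lipschitz_on UNIV F" and "\<And>x. x \<in> S \<Longrightarrow> F x = f x"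
proof -
  obtain R where R: "\<And>x. x \<in> S \<Longrightarrow> norm x \<le> R" using S unfolding bounded_iff by blast
  define B where "B = cball (0::'a) \<bar>R\<bar>"
  have B: "convex B" "closed B" "B \<noteq> {}" "compact B" unfolding B_def by auto
  obtain M where M: "\<And>x. x \<in> B \<Longrightarrow> norm (f' x) \<le> M"
    using compact_imp_bounded[OF compact_continuous_image[OF continuous_on_subset[OF f'_cont] B(4)]]
    unfolding bounded_iff by auto
  have "(max 0 M)-lipschitz_on B f"
    using f_deriv M B(1)
    by (intro bounded_derivative_imp_lipschitz) (auto intro: has_derivative_at_withinI simp: norm_blinfun.rep_eq[symmetric] le_max_iff_disj)
  then have "(max 0 M)-lipschitz_on (range (closest_point B)) f"
    by (rule lipschitz_on_subset) (use closest_point_in_set[OF B(2,3)] in auto)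
  moreover have "1-lipschitz_on UNIV (closest_point B)"
    by (rule lipschitz_onI) (use closest_point_lipschitz[OF B(1-3)] in auto)
  ultimately have "(max 0 M * 1)-lipschitz_on UNIV (\<lambda>x. f (closest_point B x))"
    by (intro lipschitz_on_compose2)
  moreover have "f (closest_point B x) = f x" if "x \<in> S" for x
    using R[OF that] by (simp add: B_def closest_point_self)
  ultimately show ?thesis using that by blast
qed

lemma sublevel_solution_exists:
  fixes f :: "'a::euclidean_space \<Rightarrow> 'a" and W :: "'a \<Rightarrow> real"
  assumes f_deriv: "\<And>x. (f has_derivative blinfun_apply (f' x)) (at x)"
    and f'_cont: "continuous_on UNIV f'" and f0: "f 0 = 0"
    and X: "closed X" and W: "\<And>x. x \<in> X \<Longrightarrow> (W has_derivative W' x) (at x)"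
    and bounded: "bounded {x \<in> X. W x \<le> c}" and interior: "{x \<in> X. W x \<le> c} \<subseteq> interior X"
    and boundary: "\<And>x. x \<in> X \<Longrightarrow> W x = c \<Longrightarrow> W' x (f x) < 0"
    and x0: "x0 \<in> X" "W x0 \<le> c"
  shows "\<exists>\<phi>. is_solution f x0 \<phi>"
proof -
  have "bounded (insert 0 {x \<in> X. W x \<le> c})" using bounded by simp
  from C1_lipschitz_on_bounded_extension[OF f_deriv f'_cont this]
  obtain L F where F: "L-lipschitz_on UNIV F" "\<And>x. x \<in> insert 0 {x \<in> X. W x \<le> c} \<Longrightarrow> F x = f x"
    by blast
  have "F 0 = 0" using F(2)[of 0] f0 by simp
  then obtain \<phi> where sol: "is_solution F x0 \<phi>"
    using lipschitz_ode_solution_exists[OF F(1)] by blast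
  have F_boundary: "W' x (F x) < 0" if "x \<in> X" "W x = c" for x
    using F(2)[of x] boundary[OF that] that by simp
  have stays: "\<phi> t \<in> {x \<in> X. W x \<le> c}" if "0 \<le> t" for t
    by (rule is_solution_sublevel_invariant[OF sol X W interior F_boundary x0 that])
  have "F (\<phi> t) = f (\<phi> t)" if "0 \<le> t" for t
    using stays[OF that] by (intro F(2)) simp
  then have "is_solution f x0 \<phi>"
    by (rule is_solution_cong[OF sol])
  then show ?thesis by blast
qed

section \<open>Convergence to the origin\<close>

lemma at_within_nonneg_eq_at: "0 < t \<Longrightarrow> at t within {0..} = at (t::real)"
  by (rule at_within_nhd[of t "{0<..}", where U = UNIV, simplified]) auto

lemma is_solution_continuous_on_comp:
  fixes \<phi> :: "real \<Rightarrow> 'a::real_normed_vector" and W :: "'a \<Rightarrow> real"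
  assumes sol: "is_solution F x0 \<phi>" and W: "\<And>t. 0 \<le> t \<Longrightarrow> (W has_derivative W' (\<phi> t)) (at (\<phi> t))"
  shows "continuous_on {0..} (\<lambda>s. W (\<phi> s))"
  unfolding continuous_on_eq_continuous_within
proof
  fix t :: real assume "t \<in> {0..}"
  then have "0 \<le> t" by simp
  from is_solution_has_real_derivative_comp[OF sol this W[OF this]]
  show "continuous (at t within {0..}) (\<lambda>s. W (\<phi> s))" by (rule DERIV_continuous)
qed

lemma exp_decay_if_has_real_derivative_le:
  fixes g :: "real \<Rightarrow> real"
  assumes t: "0 \<le> t" and cont: "continuous_on {0..t} g"
    and deriv: "\<And>s. 0 < s \<Longrightarrow> s < t \<Longrightarrow> (g has_real_derivative g' s) (at s)"
    and le: "\<And>s. 0 < s \<Longrightarrow> s < t \<Longrightarrow> g' s \<le> - \<kappa> * g s"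
  shows "g t \<le> exp (- \<kappa> * t) * g 0"
proof -
  have "exp (\<kappa> * t) * g t \<le> exp (\<kappa> * 0) * g 0"
  proof (rule DERIV_nonpos_imp_decreasing_open[OF t])
    fix s assume s: "0 < s" "s < t"
    have "((\<lambda>s. exp (\<kappa> * s) * g s) has_real_derivative exp (\<kappa> * s) * (\<kappa> * g s + g' s)) (at s)"
      by (auto intro!: derivative_eq_intros deriv[OF s] simp: algebra_simps)
    moreover have "exp (\<kappa> * s) * (\<kappa> * g s + g' s) \<le> 0"
      using le[OF s] by (intro mult_nonneg_nonpos) auto
    ultimately show "\<exists>y. ((\<lambda>s. exp (\<kappa> * s) * g s) has_real_derivative y) (at s) \<and> y \<le> 0" by blast
  qed (intro continuous_intros cont)
  then show ?thesis by (simp add: exp_minus field_simps)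
qed

lemma tendsto_zero_if_quadratic_form_exp_bound:
  fixes \<phi> :: "real \<Rightarrow> real^'n"
  assumes P: "pos_def_mat P" and \<kappa>: "0 < \<kappa>"
    and bound: "\<And>t. 0 \<le> t \<Longrightarrow> \<phi> t \<bullet> (P *v \<phi> t) \<le> exp (- \<kappa> * t) * C"
  shows "(\<phi> \<longlongrightarrow> 0) at_top"
proof -
  obtain p where p: "0 < p" "\<And>x::real^'n. p * (norm x)\<^sup>2 \<le> x \<bullet> (P *v x)"
    using pos_def_mat_lower_bound[OF P] by blast
  have norm_bound: "norm (\<phi> t) \<le> sqrt (C / p * exp (- \<kappa> * t))" if "0 \<le> t" for t
  proof (rule real_le_rsqrt)
    have "p * (norm (\<phi> t))\<^sup>2 \<le> exp (- \<kappa> * t) * C"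
      using p(2) bound[OF that] by (rule order.trans)
    then show "(norm (\<phi> t))\<^sup>2 \<le> C / p * exp (- \<kappa> * t)"
      using p(1) by (simp add: field_simps)
  qed
  have "((\<lambda>t. exp (- \<kappa> * t)) \<longlongrightarrow> 0) at_top" using \<kappa> by real_asymp
  then have "((\<lambda>t. sqrt (C / p * exp (- \<kappa> * t))) \<longlongrightarrow> sqrt (C / p * 0)) at_top"
    by (intro tendsto_intros)
  then have "((\<lambda>t. sqrt (C / p * exp (- \<kappa> * t))) \<longlongrightarrow> 0) at_top" by simp
  with eventually_at_top_linorderI[of 0, OF norm_bound] show ?thesis
    by (rule Lim_null_comparison)
qed

lemma is_solution_quadratic_form_exp_decay:
  fixes F :: "real^'n \<Rightarrow> real^'n"
  assumes sol: "is_solution F x0 \<phi>" and P: "symmetric_mat P"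
    and K: "0 < K" "\<And>x. x \<bullet> (P *v x) \<le> K * (norm x)\<^sup>2" and \<delta>: "0 \<le> \<delta>"
    and decay: "\<And>t. 0 \<le> t \<Longrightarrow> 2 * (\<phi> t \<bullet> (P *v F (\<phi> t))) \<le> - \<delta> * (norm (\<phi> t))\<^sup>2"
    and t: "0 \<le> t"
  shows "\<phi> t \<bullet> (P *v \<phi> t) \<le> exp (- (\<delta> / K) * t) * (x0 \<bullet> (P *v x0))"
proof -
  define V where "V x = x \<bullet> (P *v x)" for x :: "real^'n"
  have dV: "(V has_derivative (\<lambda>h. 2 * (x \<bullet> (P *v h)))) (at x)" for x
    unfolding V_def by (rule has_derivative_quadratic_form[OF P])
  have "V (\<phi> t) \<le> exp (- (\<delta> / K) * t) * V (\<phi> 0)"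
  proof (rule exp_decay_if_has_real_derivative_le[OF t])
    show "continuous_on {0..t} (\<lambda>s. V (\<phi> s))"
      using is_solution_continuous_on_comp[OF sol dV] by (rule continuous_on_subset) auto
    fix s :: real assume s: "0 < s"
    then have "0 \<le> s" by simp
    from is_solution_has_real_derivative_comp[OF sol this dV]
    show "((\<lambda>s. V (\<phi> s)) has_real_derivative 2 * (\<phi> s \<bullet> (P *v F (\<phi> s)))) (at s)"
      using s by (simp add: at_within_nonneg_eq_at)
    have "\<delta> / K * V (\<phi> s) \<le> \<delta> / K * (K * (norm (\<phi> s))\<^sup>2)"
      unfolding V_def using K \<delta> by (intro mult_left_mono) auto
    then show "2 * (\<phi> s \<bullet> (P *v F (\<phi> s))) \<le> - (\<delta> / K) * V (\<phi> s)"
      using decay[OF \<open>0 \<le> s\<close>] K(1) by simp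
  qed
  then show ?thesis
    using sol by (simp add: is_solution_def V_def)
qed

text \<open>The ellipsoid is forward invariant, and on it the decay rate \<open>\<delta> \<parallel>x\<parallel>\<^sup>2\<close> dominates a multiple of
  \<open>x\<^sup>T P x\<close>, so that \<open>x\<^sup>T P x\<close> decays exponentially along solutions.\<close>

lemma is_solution_in_ellipsoid_tendsto_zero:
  fixes F :: "real^'n \<Rightarrow> real^'n"
  assumes sol: "is_solution F x0 \<phi>" and P: "symmetric_mat P" "pos_def_mat P"
    and c: "0 < c" and \<delta>: "0 < \<delta>"
    and decay: "\<And>x. x \<bullet> (P *v x) \<le> c \<Longrightarrow> 2 * (x \<bullet> (P *v F x)) \<le> - \<delta> * (norm x)\<^sup>2"
    and x0: "x0 \<bullet> (P *v x0) \<le> c"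
  shows "(\<phi> \<longlongrightarrow> 0) at_top"
proof -
  obtain K where K: "0 < K" "\<And>x::real^'n. \<bar>x \<bullet> (P *v x)\<bar> \<le> K * (norm x)\<^sup>2"
    using quadratic_form_upper_bound[of P] by blast
  have boundary: "2 * (x \<bullet> (P *v F x)) < 0" if "x \<bullet> (P *v x) = c" for x
  proof -
    have "x \<noteq> 0" using c that by auto
    then have "0 < \<delta> * (norm x)\<^sup>2" using \<delta> by simp
    then show ?thesis using decay[of x] that by simp
  qed
  have inside: "\<phi> t \<bullet> (P *v \<phi> t) \<le> c" if "0 \<le> t" for t
    using is_solution_sublevel_invariant[OF sol closed_UNIV has_derivative_quadratic_form[OF P(1)], of c]
      boundary x0 that by simp
  have exp_bound: "\<phi> t \<bullet> (P *v \<phi> t) \<le> exp (- (\<delta> / K) * t) * c" if "0 \<le> t" for t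
  proof -
    have "\<phi> t \<bullet> (P *v \<phi> t) \<le> exp (- (\<delta> / K) * t) * (x0 \<bullet> (P *v x0))"
      using K decay inside \<delta>
      by (intro is_solution_quadratic_form_exp_decay[OF sol P(1) K(1) _ _ _ that]) (auto simp: abs_le_iff)
    also have "\<dots> \<le> exp (- (\<delta> / K) * t) * c" using x0 by simp
    finally show ?thesis .
  qed
  show ?thesis
    by (rule tendsto_zero_if_quadratic_form_exp_bound[OF P(2) _ exp_bound]) (use \<delta> K(1) in simp)
qed

lemma is_solution_reaches_sublevel:
  fixes \<phi> :: "real \<Rightarrow> 'a::real_normed_vector" and W :: "'a \<Rightarrow> real"
  assumes sol: "is_solution F x0 \<phi>" and stays: "\<And>t. 0 \<le> t \<Longrightarrow> \<phi> t \<in> K"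
    and W: "\<And>x. x \<in> K \<Longrightarrow> (W has_derivative W' x) (at x)"
    and dec: "\<And>x. x \<in> K \<Longrightarrow> c < W x \<Longrightarrow> W' x (F x) \<le> - \<epsilon>" and \<epsilon>: "0 < \<epsilon>"
  shows "\<exists>t\<ge>0. W (\<phi> t) \<le> c"
proof (rule ccontr)
  assume "\<not> ?thesis"
  then have above: "c < W (\<phi> t)" if "0 \<le> t" for t
    using that by (meson not_le)
  have x0: "\<phi> 0 = x0" using sol by (simp add: is_solution_def)
  define b where "b = (W x0 - c) / \<epsilon> + 1"
  have "\<epsilon> * b = W x0 - c + \<epsilon>" unfolding b_def using \<epsilon> by (simp add: field_simps)
  moreover have "0 < b"
    using above[of 0] \<epsilon> x0 unfolding b_def by (simp add: add_pos_nonneg)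
  moreover have "W (\<phi> b) + \<epsilon> * b \<le> W (\<phi> 0) + \<epsilon> * 0"
  proof (rule DERIV_nonpos_imp_decreasing_open[OF less_imp_le[OF \<open>0 < b\<close>]])
    fix s :: real assume s: "0 < s" "s < b"
    then have "0 \<le> s" by simp
    from is_solution_has_real_derivative_comp[OF sol this W[OF stays[OF this]]]
    have "((\<lambda>s. W (\<phi> s)) has_real_derivative W' (\<phi> s) (F (\<phi> s))) (at s)"
      using s by (simp add: at_within_nonneg_eq_at)
    from DERIV_add[OF this DERIV_cmult_Id]
    have "((\<lambda>s. W (\<phi> s) + \<epsilon> * s) has_real_derivative W' (\<phi> s) (F (\<phi> s)) + \<epsilon>) (at s)" .
    moreover have "W' (\<phi> s) (F (\<phi> s)) \<le> - \<epsilon>"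
      using dec[OF stays[OF \<open>0 \<le> s\<close>] above[OF \<open>0 \<le> s\<close>]] .
    ultimately show "\<exists>y. ((\<lambda>s. W (\<phi> s) + \<epsilon> * s) has_real_derivative y) (at s) \<and> y \<le> 0"
      by (intro exI[of _ "W' (\<phi> s) (F (\<phi> s)) + \<epsilon>"]) simp
  next
    have "continuous_on {0..b} (\<lambda>s. W (\<phi> s))"
      using is_solution_continuous_on_comp[OF sol W[OF stays]] by (rule continuous_on_subset) auto
    then show "continuous_on {0..b} (\<lambda>s. W (\<phi> s) + \<epsilon> * s)"
      by (intro continuous_intros)
  qed
  ultimately show False using above[of b] x0 \<epsilon> by simp
qed

lemma is_solution_tendsto_zero:
  fixes F :: "real^'n \<Rightarrow> real^'n" and W :: "real^'n \<Rightarrow> real"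
  assumes sol: "is_solution F x0 \<phi>"
    and P: "symmetric_mat P" "pos_def_mat P" and c: "0 < c" and \<delta>: "0 < \<delta>"
    and decay: "\<And>x. x \<bullet> (P *v x) \<le> c \<Longrightarrow> 2 * (x \<bullet> (P *v F x)) \<le> - \<delta> * (norm x)\<^sup>2"
    and X: "closed X" and W: "\<And>x. x \<in> X \<Longrightarrow> (W has_derivative W' x) (at x)"
    and \<epsilon>: "0 < \<epsilon>" and c12: "c1 < c2"
    and cond_a: "\<And>x. x \<in> X \<Longrightarrow> c1 \<le> W x \<Longrightarrow> W x \<le> c2 \<Longrightarrow> W' x (F x) \<le> - \<epsilon>"
    and cond_b: "\<And>x. x \<in> X \<Longrightarrow> W x \<le> c1 \<Longrightarrow> x \<bullet> (P *v x) \<le> c"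
    and interior: "{x \<in> X. W x \<le> c2} \<subseteq> interior X"
    and x0: "x0 \<in> X" "W x0 \<le> c2"
  shows "(\<phi> \<longlongrightarrow> 0) at_top"
proof -
  have boundary: "W' x (F x) < 0" if "x \<in> X" "W x = c2" for x
  proof -
    have "W' x (F x) \<le> - \<epsilon>" using cond_a[of x] that c12 by simp
    with \<epsilon> show ?thesis by simp
  qed
  have stays: "\<phi> t \<in> {x \<in> X. W x \<le> c2}" if "0 \<le> t" for t
    by (rule is_solution_sublevel_invariant[OF sol X W interior boundary x0 that])
  have "\<exists>t\<ge>0. W (\<phi> t) \<le> c1"
    by (rule is_solution_reaches_sublevel[OF sol stays _ _ \<epsilon>]) (use W cond_a in auto)
  then obtain t0 where "0 \<le> t0" "W (\<phi> t0) \<le> c1" by blast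
  then have "\<phi> t0 \<bullet> (P *v \<phi> t0) \<le> c"
    using cond_b[of "\<phi> t0"] stays[of t0] by simp
  with is_solution_shift[OF sol \<open>0 \<le> t0\<close>] P c \<delta> decay
  have "((\<lambda>t. \<phi> (t0 + t)) \<longlongrightarrow> 0) at_top"
    by (rule is_solution_in_ellipsoid_tendsto_zero)
  moreover have "filterlim (\<lambda>t. - t0 + t) at_top at_top"
    by (rule filterlim_tendsto_add_at_top[OF tendsto_const filterlim_ident])
  ultimately have "((\<lambda>t. \<phi> (t0 + (- t0 + t))) \<longlongrightarrow> 0) at_top"
    by (rule filterlim_compose)
  then show ?thesis by simp
qed

theorem proposition3:
  fixes f :: "real^'n \<Rightarrow> real^'n"
    and f' :: "real^'n \<Rightarrow> ((real^'n) \<Rightarrow>\<^sub>L (real^'n))"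
    and A P Q :: "real^'n^'n"
    and c r \<epsilon> c1 c2 :: real
    and X :: "(real^'n) set"
    and W :: "real^'n \<Rightarrow> real"
    and W' :: "real^'n \<Rightarrow> ((real^'n) \<Rightarrow>\<^sub>L real)"
  assumes f_deriv: "\<And>x. (f has_derivative blinfun_apply (f' x)) (at x)"
    and f'_cont: "continuous_on UNIV f'"
    and f0: "f 0 = 0"
    and A_def: "(f has_derivative (\<lambda>x. A *v x)) (at 0)"
    and A_hurwitz: "hurwitz A"
    and Q_sym: "symmetric_mat Q" and Q_pd: "pos_def_mat Q"
    and lyap: "P ** A + transpose A ** P = - Q"
    and c_pos: "c > 0" and r_pos: "r > 0" and r_less: "r < lambda_min Q"
    and local_bound: "\<And>x. x \<bullet> (P *v x) \<le> c \<Longrightarrow>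
                         2 * (x \<bullet> (P *v (f x - A *v x))) \<le> r * (norm x)^2"
    and X_compact: "compact X"
    and W_deriv: "\<And>x. x \<in> X \<Longrightarrow> (W has_derivative blinfun_apply (W' x)) (at x)"
    and W'_cont: "continuous_on X W'"
    and eps_pos: "\<epsilon> > 0" and c1_pos: "c1 > 0" and c12: "c1 < c2"
    and cond_a: "\<And>x. x \<in> X \<Longrightarrow> c1 \<le> W x \<Longrightarrow> W x \<le> c2 \<Longrightarrow> blinfun_apply (W' x) (f x) \<le> - \<epsilon>"
    and cond_b: "\<And>x. x \<in> X \<Longrightarrow> W x \<le> c1 \<Longrightarrow> x \<bullet> (P *v x) \<le> c"
    and no_boundary: "{x \<in> X. W x \<le> c2} \<inter> frontier X = {}"
  shows "{x \<in> X. W x \<le> c2} \<subseteq> domain_of_attraction f"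
proof -
  have P: "symmetric_mat P" "pos_def_mat P"
    using lyapunov_equation_symmetric[OF A_hurwitz Q_pd Q_sym lyap]
      lyapunov_equation_pos_def[OF A_hurwitz Q_pd lyap] .
  have decay: "\<And>x. x \<bullet> (P *v x) \<le> c \<Longrightarrow> 2 * (x \<bullet> (P *v f x)) \<le> - (lambda_min Q - r) * (norm x)\<^sup>2"
    using lyapunov_equation_local_decay[OF P(1) Q_sym lyap local_bound] .
  have X: "closed X" using X_compact by (rule compact_imp_closed)
  have interior: "{x \<in> X. W x \<le> c2} \<subseteq> interior X"
    using no_boundary closure_subset unfolding frontier_def by blast
  have bounded: "bounded {x \<in> X. W x \<le> c2}"
    using compact_imp_bounded[OF X_compact] by (rule bounded_subset) auto
  have boundary: "blinfun_apply (W' x) (f x) < 0" if "x \<in> X" "W x = c2" for x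
    using cond_a[OF that(1)] that(2) c12 eps_pos by fastforce
  show ?thesis
    unfolding domain_of_attraction_def
  proof (intro subsetI CollectI conjI allI impI)
    fix x0 \<phi> assume x0: "x0 \<in> {x \<in> X. W x \<le> c2}"
    then show "\<exists>\<phi>. is_solution f x0 \<phi>"
      using sublevel_solution_exists[OF f_deriv f'_cont f0 X W_deriv bounded interior boundary] by blast
    assume "is_solution f x0 \<phi>"
    then show "(\<phi> \<longlongrightarrow> 0) at_top"
      using is_solution_tendsto_zero[OF _ P c_pos _ decay X W_deriv eps_pos c12 cond_a cond_b interior] x0 r_less
      by simp
  qed
qed

end
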